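(* Let $X=(X_1,X_2)$ and $Y$ where $X_1,Y$ are uniform on $\{1,2,3\}$, $X_2\sim\mathrm{Bern}(p)$ with $0<p\le\frac12$, and $X_1,X_2,Y$ are mutually independent. Let $f_1(X,Y)=\mathbf 1\{X_1=Y\}$ and $f_2(X,Y)=X_2$, with Hamming distortion $d_i(a,b)=\mathbf 1\{a\ne b\}$, and let $D_1=0$ and $0\le D_2\le p$ with $D_2<\frac12$. Then every triple $(R_0,R_X,R_Y)$ with $R_0>\log_2 3$, $R_X>H_b(p)-H_b(D_2)$, and $R_Y>H_b(1/3)$ is achievable with distortions $(D_1,D_2)$; in particular, for $R_0>H(X_1|Y)$ the sum rate $R_X+R_Y$ can be made arbitrarily close to $H(f_1(X,Y))+H_b(p)-H_b(D_2)$.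
   Context: $H_b(q)=-q\log_2q-(1-q)\log_2(1-q)$ is the binary entropy function. Setup: finite alphabets, $(X_i,Y_i)_{i\ge1}$ i.i.d. copies of $(X,Y)$, functions $f_i:\mathcal X\times\mathcal Y\to\mathcal F_i$, distortions $d_i:\mathcal F_i\times\mathcal F_i\to\mathbb R_{\ge0}$. An $(n,R_0,R_X,R_Y)$ code consists of encoders $\varphi_0:\mathcal X^n\to\{1,\dots,2^{nR_0}\}$, $\varphi_X:\mathcal X^n\to\{1,\dots,2^{nR_X}\}$, $\varphi_Y:\mathcal Y^n\times\{1,\dots,2^{nR_0}\}\to\{1,\dots,2^{nR_Y}\}$ and decoders $\psi_i:\{1,\dots,2^{nR_X}\}\times\{1,\dots,2^{nR_Y}\}\to\mathcal F_i^n$; with $\hat F_i=\psi_i(\varphi_X(\mathbf X),\varphi_Y(\varphi_0(\mathbf X),\mathbf Y))$ its average distortions are $\frac1n\sum_{j=1}^n\mathbb E\,d_i(f_i(X_j,Y_j),(\hat F_i)_j)$. A triple is achievable with distortions $D_1,D_2$ if for every $\varepsilon>0$ and all large $n$ there is a code with average distortions at most $D_1$, $D_2$. *)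

theory Defs
  imports "HOL-Probability.Probability"
begin

text \<open>Binary entropy (base 2), with the convention 0 log 0 = 0
  (automatic, since log 2 0 = 0 in Isabelle).\<close>
definition Hb :: "real \<Rightarrow> real" where
  "Hb q = - q * log 2 q - (1 - q) * log 2 (1 - q)"

definition entropy_pmf :: "'a pmf \<Rightarrow> real" where
  "entropy_pmf q = - (\<Sum>x\<in>set_pmf q. pmf q x * log 2 (pmf q x))"

definition cond_entropy_pmf :: "('a \<times> 'b) pmf \<Rightarrow> real" where
  "cond_entropy_pmf q = entropy_pmf q - entropy_pmf (map_pmf snd q)"

definition msgs :: "nat \<Rightarrow> real \<Rightarrow> nat" where
  "msgs n R = nat \<lfloor>2 powr (real n * R)\<rfloor>"

definition blocks :: "'a set \<Rightarrow> nat \<Rightarrow> 'a list set" where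
  "blocks A n = {zs. set zs \<subseteq> A \<and> length zs = n}"

definition is_code ::
  "nat \<Rightarrow> real \<Rightarrow> real \<Rightarrow> real \<Rightarrow> ('x list \<Rightarrow> nat) \<Rightarrow> ('x list \<Rightarrow> nat)
     \<Rightarrow> ('y list \<Rightarrow> nat \<Rightarrow> nat) \<Rightarrow> bool" where
  "is_code n R0 RX RY phi0 phiX phiY \<longleftrightarrow>
     (\<forall>xs. length xs = n \<longrightarrow> phi0 xs \<in> {1..msgs n R0} \<and> phiX xs \<in> {1..msgs n RX}) \<and>
     (\<forall>ys m. length ys = n \<and> m \<in> {1..msgs n R0} \<longrightarrow> phiY ys m \<in> {1..msgs n RY})"

text \<open>Average distortion (1/n) sum_j E d(f(X_j,Y_j), (Fhat)_j), where (X_j,Y_j) are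
  i.i.d. with law P and Fhat is computed from the whole blocks (X^n, Y^n).\<close>
definition avg_dist ::
  "('x \<times> 'y) pmf \<Rightarrow> nat \<Rightarrow> ('x \<Rightarrow> 'y \<Rightarrow> 'f) \<Rightarrow> ('f \<Rightarrow> 'f \<Rightarrow> real)
     \<Rightarrow> ('x list \<Rightarrow> 'y list \<Rightarrow> nat \<Rightarrow> 'f) \<Rightarrow> real" where
  "avg_dist P n f d Fhat =
     (1 / real n) * (\<Sum>j<n. \<Sum>zs\<in>blocks (set_pmf P) n.
        (\<Prod>k<n. pmf P (zs ! k)) *
        d (f (fst (zs ! j)) (snd (zs ! j))) (Fhat (map fst zs) (map snd zs) j))"

text \<open>Decoders psi_i map the two messages to a sequence in F_i^n (index j < n).\<close>
definition achievable ::
  "('x \<times> 'y) pmf \<Rightarrow> ('x \<Rightarrow> 'y \<Rightarrow> 'f1) \<Rightarrow> ('x \<Rightarrow> 'y \<Rightarrow> 'f2)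
     \<Rightarrow> ('f1 \<Rightarrow> 'f1 \<Rightarrow> real) \<Rightarrow> ('f2 \<Rightarrow> 'f2 \<Rightarrow> real)
     \<Rightarrow> real \<Rightarrow> real \<Rightarrow> real \<Rightarrow> real \<Rightarrow> real \<Rightarrow> bool" where
  "achievable P f1 f2 d1 d2 R0 RX RY D1 D2 \<longleftrightarrow>
     (\<forall>\<epsilon>>0. \<exists>N. \<forall>n\<ge>N. \<exists>(phi0 :: 'x list \<Rightarrow> nat) (phiX :: 'x list \<Rightarrow> nat)
        (phiY :: 'y list \<Rightarrow> nat \<Rightarrow> nat) (psi1 :: nat \<Rightarrow> nat \<Rightarrow> nat \<Rightarrow> 'f1)
        (psi2 :: nat \<Rightarrow> nat \<Rightarrow> nat \<Rightarrow> 'f2).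
        is_code n R0 RX RY phi0 phiX phiY \<and>
        avg_dist P n f1 d1 (\<lambda>xs ys. psi1 (phiX xs) (phiY ys (phi0 xs))) \<le> D1 + \<epsilon> \<and>
        avg_dist P n f2 d2 (\<lambda>xs ys. psi2 (phiX xs) (phiY ys (phi0 xs))) \<le> D2 + \<epsilon>)"

definition hamming :: "'a \<Rightarrow> 'a \<Rightarrow> real" where
  "hamming a b = (if a \<noteq> b then 1 else 0)"

text \<open>The example source: X = (X1,X2), X1,Y uniform on {1,2,3}, X2 ~ Bern(p)
  (X2 = 1 encoded as True), mutually independent.\<close>
definition ex_src :: "real \<Rightarrow> ((nat \<times> bool) \<times> nat) pmf" where
  "ex_src p = pair_pmf (pair_pmf (pmf_of_set {1,2,3}) (bernoulli_pmf p)) (pmf_of_set {1,2,3})"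

definition ex_f1 :: "nat \<times> bool \<Rightarrow> nat \<Rightarrow> bool" where
  "ex_f1 x y = (fst x = y)"

definition ex_f2 :: "nat \<times> bool \<Rightarrow> nat \<Rightarrow> bool" where
  "ex_f2 x y = snd x"

end

theory Submission
  imports Defs "HOL-Real_Asymp.Real_Asymp"
begin

text \<open>Since \<open>R\<^sub>0 > log 3 = H(X\<^sub>1)\<close>, the \<open>X\<close>-terminal can send \<open>X\<^sub>1\<^sup>n\<close> losslessly to the
  \<open>Y\<close>-terminal, which then knows \<open>f\<^sub>1\<^sup>n\<close> exactly: an i.i.d. \<open>Bern(1/3)\<close> sequence, which it compresses
  at any rate above \<open>Hb(1/3)\<close> with vanishing distortion; the \<open>X\<close>-terminal compresses the \<open>Bern(p)\<close>
  sequence \<open>X\<^sub>2\<^sup>n\<close> at any rate above \<open>Hb p - Hb D\<^sub>2\<close> with distortion \<open>D\<^sub>2\<close>.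

  The lossy coding theorem for a Bernoulli source under Hamming distortion is proved by covering:
  for the reverse test channel, Chebyshev's inequality shows that a typical source block lies within
  distortion about \<open>D\<close> of a random reconstruction with probability at least about
  \<open>2^{-n(Hb p - Hb D)}\<close>, so a greedily chosen codebook of \<open>2^{nR}\<close> words covers every typical block.\<close>

section \<open>Expectations over blocks of independent letters\<close>

definition block_expect :: "('a \<Rightarrow> real) list \<Rightarrow> 'a set \<Rightarrow> ('a list \<Rightarrow> real) \<Rightarrow> real" where
  "block_expect qs A F = (\<Sum>zs\<in>blocks A (length qs). (\<Prod>k<length qs. (qs!k) (zs!k)) * F zs)"

definition prob_weights :: "('a \<Rightarrow> real) list \<Rightarrow> 'a set \<Rightarrow> bool" where
  "prob_weights qs A \<longleftrightarrow> (\<forall>q\<in>set qs. (\<forall>a. q a \<ge> 0) \<and> (\<Sum>a\<in>A. q a) = 1)"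

lemma blocks_0 [simp]: "blocks A 0 = {[]}"
  by (auto simp: blocks_def)

lemma blocks_Suc: "blocks A (Suc n) = (\<lambda>(z, zs). z # zs) ` (A \<times> blocks A n)"
proof -
  have "xs \<in> (\<lambda>(z, zs). z # zs) ` (A \<times> blocks A n)" if "xs \<in> blocks A (Suc n)" for xs
    using that by (cases xs) (auto simp: blocks_def)
  then show ?thesis by (auto simp: blocks_def)
qed

lemma finite_blocks: "finite A \<Longrightarrow> finite (blocks A n)"
  by (induction n) (auto simp: blocks_Suc)

lemma card_blocks: "finite A \<Longrightarrow> card (blocks A n) = card A ^ n"
proof (induction n)
  case (Suc n)
  have "inj_on (\<lambda>(z, zs). z # zs) (A \<times> blocks A n)" by (auto simp: inj_on_def)
  with Suc show ?case by (simp add: blocks_Suc card_image card_cartesian_product)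
qed simp

lemma block_expect_Nil [simp]: "block_expect [] A F = F []"
  by (simp add: block_expect_def)

lemma block_expect_Cons:
  assumes "finite A"
  shows "block_expect (q # qs) A F = (\<Sum>z\<in>A. q z * block_expect qs A (\<lambda>zs. F (z # zs)))"
proof -
  have inj: "inj_on (\<lambda>(z, zs). z # zs) (A \<times> blocks A (length qs))"
    by (auto simp: inj_on_def)
  have "block_expect (q # qs) A F = (\<Sum>(z, zs)\<in>A \<times> blocks A (length qs).
          (\<Prod>k<Suc (length qs). ((q # qs)!k) ((z # zs)!k)) * F (z # zs))"
    unfolding block_expect_def length_Cons blocks_Suc sum.reindex[OF inj] comp_def
    by (simp only: case_prod_unfold)
  also have "\<dots> = (\<Sum>(z, zs)\<in>A \<times> blocks A (length qs).
          q z * ((\<Prod>k<length qs. (qs!k) (zs!k)) * F (z # zs)))"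
    by (intro sum.cong refl) (auto simp: prod.lessThan_Suc_shift simp del: prod.lessThan_Suc)
  also have "\<dots> = (\<Sum>z\<in>A. q z * block_expect qs A (\<lambda>zs. F (z # zs)))"
    unfolding block_expect_def sum.cartesian_product[symmetric]
    by (simp add: sum_distrib_left)
  finally show ?thesis .
qed

lemma block_expect_add: "block_expect qs A (\<lambda>zs. F zs + G zs) = block_expect qs A F + block_expect qs A G"
  by (simp add: block_expect_def distrib_left sum.distrib)

lemma block_expect_cmult: "block_expect qs A (\<lambda>zs. c * F zs) = c * block_expect qs A F"
  by (simp add: block_expect_def sum_distrib_left mult_ac)

lemma block_expect_diff: "block_expect qs A (\<lambda>zs. F zs - G zs) = block_expect qs A F - block_expect qs A G"
  by (simp add: block_expect_def right_diff_distrib sum_subtractf)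

lemma block_expect_cong:
  "(\<And>zs. zs \<in> blocks A (length qs) \<Longrightarrow> F zs = G zs) \<Longrightarrow> block_expect qs A F = block_expect qs A G"
  by (simp add: block_expect_def)

lemma block_expect_mono:
  assumes "\<forall>q\<in>set qs. \<forall>a. q a \<ge> 0" "\<And>zs. zs \<in> blocks A (length qs) \<Longrightarrow> F zs \<le> G zs"
  shows "block_expect qs A F \<le> block_expect qs A G"
  unfolding block_expect_def
  by (intro sum_mono mult_left_mono prod_nonneg) (use assms in auto)

lemma block_expect_const:
  assumes "finite A" "prob_weights qs A"
  shows "block_expect qs A (\<lambda>_. c) = c"
  using assms(2)
proof (induction qs)
  case (Cons q qs)
  then have "prob_weights qs A" "(\<Sum>a\<in>A. q a) = 1" by (auto simp: prob_weights_def)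
  with Cons show ?case by (simp add: block_expect_Cons[OF assms(1)] sum_distrib_right[symmetric])
qed simp

definition block_sum :: "('a \<Rightarrow> real) list \<Rightarrow> 'a list \<Rightarrow> real" where
  "block_sum gs zs = (\<Sum>j<length gs. (gs!j) (zs!j))"

definition block_mean :: "('a \<Rightarrow> real) list \<Rightarrow> ('a \<Rightarrow> real) list \<Rightarrow> 'a set \<Rightarrow> real" where
  "block_mean gs qs A = (\<Sum>j<length gs. \<Sum>a\<in>A. (qs!j) a * (gs!j) a)"

lemma block_sum_Cons [simp]: "block_sum (g # gs) (z # zs) = g z + block_sum gs zs"
  by (simp add: block_sum_def sum.lessThan_Suc_shift del: sum.lessThan_Suc)

lemma block_mean_Cons [simp]: "block_mean (g # gs) (q # qs) A = (\<Sum>a\<in>A. q a * g a) + block_mean gs qs A"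
  by (simp add: block_mean_def sum.lessThan_Suc_shift del: sum.lessThan_Suc)

lemma block_expect_block_sum:
  assumes "finite A" "prob_weights qs A" "length gs = length qs"
  shows "block_expect qs A (block_sum gs) = block_mean gs qs A"
  using assms(3,2)
proof (induction gs qs rule: list_induct2)
  case Nil then show ?case by (simp add: block_sum_def block_mean_def)
next
  case (Cons g gs q qs)
  then have pw: "prob_weights qs A" and q1: "(\<Sum>a\<in>A. q a) = 1" by (auto simp: prob_weights_def)
  have "block_expect (q # qs) A (block_sum (g # gs)) = (\<Sum>z\<in>A. q z * (g z + block_mean gs qs A))"
    by (simp add: block_expect_Cons[OF assms(1)] block_expect_add block_expect_const[OF assms(1) pw]
        Cons.IH[OF pw])
  also have "\<dots> = block_mean (g # gs) (q # qs) A"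
    using q1 by (simp add: distrib_left sum.distrib sum_distrib_right[symmetric])
  finally show ?case .
qed

lemma abs_weighted_sum_le:
  fixes q g :: "'a \<Rightarrow> real"
  assumes "\<forall>a. q a \<ge> 0" "(\<Sum>a\<in>A. q a) = 1" "\<forall>a\<in>A. \<bar>g a\<bar> \<le> G"
  shows "\<bar>\<Sum>a\<in>A. q a * g a\<bar> \<le> G"
proof -
  have "\<bar>\<Sum>a\<in>A. q a * g a\<bar> \<le> (\<Sum>a\<in>A. \<bar>q a * g a\<bar>)" by (rule sum_abs)
  also have "\<dots> \<le> (\<Sum>a\<in>A. q a * G)"
    using assms by (intro sum_mono) (auto simp: abs_mult intro: mult_left_mono)
  also have "\<dots> = G" using assms(2) by (simp add: sum_distrib_right[symmetric])
  finally show ?thesis .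
qed

lemma block_expect_variance_le:
  assumes "finite A" "prob_weights qs A" "length gs = length qs"
    and "\<forall>g\<in>set gs. \<forall>a\<in>A. \<bar>g a\<bar> \<le> G"
  shows "block_expect qs A (\<lambda>zs. (block_sum gs zs - block_mean gs qs A)\<^sup>2) \<le> real (length qs) * (4 * G\<^sup>2)"
  using assms(3,2,4)
proof (induction gs qs rule: list_induct2)
  case Nil then show ?case by (simp add: block_sum_def block_mean_def)
next
  case (Cons g gs q qs)
  then have pw: "prob_weights qs A" and qn: "\<forall>a. q a \<ge> 0" and q1: "(\<Sum>a\<in>A. q a) = 1"
    and gb: "\<forall>a\<in>A. \<bar>g a\<bar> \<le> G" and gsb: "\<forall>g\<in>set gs. \<forall>a\<in>A. \<bar>g a\<bar> \<le> G"
    by (auto simp: prob_weights_def)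
  define m0 where "m0 = (\<Sum>a\<in>A. q a * g a)"
  define m' where "m' = block_mean gs qs A"
  define V where "V = block_expect qs A (\<lambda>zs. (block_sum gs zs - m')\<^sup>2)"
  have m0_bound: "\<bar>m0\<bar> \<le> G"
    unfolding m0_def using abs_weighted_sum_le[OF qn q1 gb] .
  \<comment> \<open>the cross term vanishes because the tail is centred\<close>
  have centred: "block_expect qs A (\<lambda>zs. block_sum gs zs - m') = 0"
    by (simp add: block_expect_diff block_expect_block_sum[OF assms(1) pw Cons.hyps]
        block_expect_const[OF assms(1) pw] m'_def)
  have step: "block_expect qs A (\<lambda>zs. (g z + block_sum gs zs - (m0 + m'))\<^sup>2) = (g z - m0)\<^sup>2 + V" for z
  proof -
    have "(g z + block_sum gs zs - (m0 + m'))\<^sup>2 =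
       (g z - m0)\<^sup>2 + (2 * (g z - m0)) * (block_sum gs zs - m') + (block_sum gs zs - m')\<^sup>2" for zs
      by (simp add: power2_eq_square algebra_simps)
    then show ?thesis
      by (simp add: block_expect_add block_expect_cmult centred block_expect_const[OF assms(1) pw] V_def)
  qed
  have "block_expect (q # qs) A (\<lambda>zs. (block_sum (g # gs) zs - block_mean (g # gs) (q # qs) A)\<^sup>2)
      = (\<Sum>z\<in>A. q z * ((g z - m0)\<^sup>2 + V))"
    by (simp add: block_expect_Cons[OF assms(1)] step flip: m0_def m'_def)
  also have "\<dots> \<le> (\<Sum>z\<in>A. q z * (4 * G\<^sup>2 + V))"
  proof (intro sum_mono mult_left_mono)
    fix z assume "z \<in> A"
    then have "\<bar>g z - m0\<bar> \<le> 2 * G" using gb m0_bound by auto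
    then have "(g z - m0)\<^sup>2 \<le> (2 * G)\<^sup>2"
      by (metis abs_ge_zero power2_abs power_mono)
    then show "(g z - m0)\<^sup>2 + V \<le> 4 * G\<^sup>2 + V" by (simp add: power_mult_distrib)
  qed (use qn in auto)
  also have "\<dots> = 4 * G\<^sup>2 + V" using q1 by (simp add: sum_distrib_right[symmetric])
  also have "\<dots> \<le> real (length (q # qs)) * (4 * G\<^sup>2)"
    using Cons.IH[OF pw gsb] by (simp add: V_def m'_def algebra_simps)
  finally show ?case .
qed

lemma block_expect_chebyshev:
  assumes "finite A" "prob_weights qs A" "length gs = length qs"
    and "\<forall>g\<in>set gs. \<forall>a\<in>A. \<bar>g a\<bar> \<le> G" and t: "t > 0"
  shows "block_expect qs A (\<lambda>zs. if t \<le> \<bar>block_sum gs zs - block_mean gs qs A\<bar> then 1 else 0)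
           \<le> real (length qs) * (4 * G\<^sup>2) / t\<^sup>2"
proof -
  have "block_expect qs A (\<lambda>zs. if t \<le> \<bar>block_sum gs zs - block_mean gs qs A\<bar> then 1 else 0)
      \<le> block_expect qs A (\<lambda>zs. (1 / t\<^sup>2) * (block_sum gs zs - block_mean gs qs A)\<^sup>2)"
  proof (intro block_expect_mono)
    show "\<forall>q\<in>set qs. \<forall>a. 0 \<le> q a" using assms(2) by (auto simp: prob_weights_def)
  next
    fix zs
    have "t\<^sup>2 \<le> (block_sum gs zs - block_mean gs qs A)\<^sup>2"
      if "t \<le> \<bar>block_sum gs zs - block_mean gs qs A\<bar>"
      using that t by (metis less_imp_le power2_abs power_mono)
    then show "(if t \<le> \<bar>block_sum gs zs - block_mean gs qs A\<bar> then 1 else 0)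
          \<le> (1 / t\<^sup>2) * (block_sum gs zs - block_mean gs qs A)\<^sup>2"
      using t by (auto simp: field_simps)
  qed
  also have "\<dots> \<le> (1 / t\<^sup>2) * (real (length qs) * (4 * G\<^sup>2))"
    unfolding block_expect_cmult using block_expect_variance_le[OF assms(1-4)] t
    by (intro mult_left_mono) auto
  finally show ?thesis by simp
qed

lemma block_expect_map:
  assumes A: "finite A" and B: "finite B" and gAB: "g ` A \<subseteq> B"
  shows "block_expect qs A (\<lambda>zs. \<Phi> (map g zs))
       = block_expect (map (\<lambda>q b. \<Sum>z\<in>{z\<in>A. g z = b}. q z) qs) B \<Phi>"
proof (induction qs arbitrary: \<Phi>)
  case (Cons q qs)
  define F where "F b = block_expect (map (\<lambda>q b. \<Sum>z\<in>{z\<in>A. g z = b}. q z) qs) B (\<lambda>bs. \<Phi> (b # bs))" for b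
  have "block_expect qs A (\<lambda>zs. \<Phi> (g z # map g zs)) = F (g z)" for z
    unfolding F_def using Cons.IH[of "\<lambda>bs. \<Phi> (g z # bs)"] by simp
  then have "block_expect (q # qs) A (\<lambda>zs. \<Phi> (map g zs)) = (\<Sum>z\<in>A. q z * F (g z))"
    by (simp add: block_expect_Cons[OF A])
  also have "\<dots> = (\<Sum>b\<in>B. \<Sum>z\<in>{z. z\<in>A \<and> g z = b}. q z * F (g z))"
    by (rule sum.group[OF A B gAB, symmetric])
  also have "\<dots> = (\<Sum>b\<in>B. (\<Sum>z\<in>{z\<in>A. g z = b}. q z) * F b)"
    by (intro sum.cong refl) (simp add: sum_distrib_right)
  also have "\<dots> = block_expect (map (\<lambda>q b. \<Sum>z\<in>{z\<in>A. g z = b}. q z) (q # qs)) B \<Phi>"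
    by (simp add: block_expect_Cons[OF B] F_def)
  finally show ?case .
qed simp

lemma pmf_map_pmf_eq_sum:
  assumes "finite (set_pmf P)"
  shows "pmf (map_pmf g P) b = (\<Sum>z\<in>{z\<in>set_pmf P. g z = b}. pmf P z)"
proof -
  have "pmf (map_pmf g P) b = measure P (g -` {b} \<inter> set_pmf P)"
    by (simp add: pmf_map measure_Int_set_pmf)
  also have "\<dots> = (\<Sum>z\<in>g -` {b} \<inter> set_pmf P. pmf P z)"
    using assms by (intro measure_measure_pmf_finite) auto
  also have "g -` {b} \<inter> set_pmf P = {z\<in>set_pmf P. g z = b}" by auto
  finally show ?thesis .
qed

lemma block_expect_map_pmf:
  assumes "finite (set_pmf P)"
  shows "block_expect (replicate n (pmf P)) (set_pmf P) (\<lambda>zs. \<Phi> (map g zs))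
       = block_expect (replicate n (pmf (map_pmf g P))) (set_pmf (map_pmf g P)) \<Phi>"
proof -
  have "(\<lambda>b. \<Sum>z\<in>{z\<in>set_pmf P. g z = b}. pmf P z) = pmf (map_pmf g P)"
    by (intro ext) (simp only: pmf_map_pmf_eq_sum[OF assms])
  then show ?thesis
    using block_expect_map[of "set_pmf P" "set_pmf (map_pmf g P)" g "replicate n (pmf P)" \<Phi>] assms
    by simp
qed

lemma avg_dist_eq_block_expect:
  "avg_dist P n f d Fhat = (1 / real n) * block_expect (replicate n (pmf P)) (set_pmf P)
     (\<lambda>zs. \<Sum>j<n. d (f (fst (zs ! j)) (snd (zs ! j))) (Fhat (map fst zs) (map snd zs) j))"
  unfolding avg_dist_def block_expect_def
  by (simp add: sum_distrib_left sum.swap[of _ "{..<n}"])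

section \<open>Covering and binary entropy\<close>

lemma sum_indicator_eq_card:
  "finite U \<Longrightarrow> (\<Sum>x\<in>U. (if P x then 1 else 0 :: real)) = real (card {x\<in>U. P x})"
  by (simp add: sum.inter_filter[symmetric])

lemma exists_heavy_element:
  fixes cov :: "'x \<Rightarrow> 'c \<Rightarrow> bool" and q :: "'c \<Rightarrow> real"
  assumes B: "finite B" and qn: "\<forall>c. q c \<ge> 0" and q1: "(\<Sum>c\<in>B. q c) = 1" and U: "finite U"
    and prob: "\<forall>x\<in>U. (\<Sum>c\<in>B. q c * (if cov x c then 1 else 0)) \<ge> \<rho>"
  shows "\<exists>c\<in>B. real (card U) * \<rho> \<le> real (card {x\<in>U. cov x c})"
proof -
  define cnt where "cnt c = card {x\<in>U. cov x c}" for c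
  have "B \<noteq> {}" using q1 by auto
  then have "Max (cnt ` B) \<in> cnt ` B" using B by (intro Max_in) auto
  then obtain c where cB: "c \<in> B" and "cnt c = Max (cnt ` B)" by auto
  then have c_max: "cnt c' \<le> cnt c" if "c' \<in> B" for c' using B that by simp
  have "real (card U) * \<rho> \<le> (\<Sum>x\<in>U. \<Sum>c\<in>B. q c * (if cov x c then 1 else 0))"
    using prob sum_mono[of U "\<lambda>_. \<rho>"] by (simp add: mult.commute)
  also have "\<dots> = (\<Sum>c\<in>B. q c * real (cnt c))"
    unfolding cnt_def using U
    by (subst sum.swap) (simp add: sum_distrib_left[symmetric] sum_indicator_eq_card)
  also have "\<dots> \<le> (\<Sum>c'\<in>B. q c' * real (cnt c))"
    using c_max qn by (intro sum_mono mult_left_mono) auto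
  also have "\<dots> = real (cnt c)" using q1 by (simp add: sum_distrib_right[symmetric])
  finally show ?thesis using cB unfolding cnt_def by blast
qed

lemma small_cover_exists:
  fixes cov :: "'x \<Rightarrow> 'c \<Rightarrow> bool" and q :: "'c \<Rightarrow> real"
  assumes B: "finite B" and qn: "\<forall>c. q c \<ge> 0" and q1: "(\<Sum>c\<in>B. q c) = 1" and r1: "\<rho> \<le> 1"
  shows "finite U \<Longrightarrow> (\<forall>x\<in>U. (\<Sum>c\<in>B. q c * (if cov x c then 1 else 0)) \<ge> \<rho>) \<Longrightarrow>
         real (card U) * (1 - \<rho>)^m < 1 \<Longrightarrow> \<exists>C \<subseteq> B. card C \<le> m \<and> (\<forall>x\<in>U. \<exists>c\<in>C. cov x c)"
proof (induction m arbitrary: U)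
  case 0
  then show ?case by auto
next
  case (Suc m)
  obtain c where cB: "c \<in> B" and large: "real (card U) * \<rho> \<le> real (card {x\<in>U. cov x c})"
    using exists_heavy_element[OF B qn q1 Suc.prems(1,2)] by blast
  define U' where "U' = U - {x. cov x c}"
  have fU': "finite U'" using Suc.prems(1) by (simp add: U'_def)
  have "U = U' \<union> {x\<in>U. cov x c}" "U' \<inter> {x\<in>U. cov x c} = {}" by (auto simp: U'_def)
  then have "card U = card U' + card {x\<in>U. cov x c}"
    using Suc.prems(1) fU' by (metis card_Un_disjoint finite_Un)
  then have "real (card U') \<le> (1 - \<rho>) * real (card U)" using large by (simp add: algebra_simps)
  then have "real (card U') * (1 - \<rho>)^m \<le> (1 - \<rho>) * real (card U) * (1 - \<rho>)^m"
    using r1 by (intro mult_right_mono) auto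
  also have "\<dots> < 1" using Suc.prems(3) by (simp add: mult_ac)
  finally have "real (card U') * (1 - \<rho>)^m < 1" .
  moreover have "\<forall>x\<in>U'. \<rho> \<le> (\<Sum>c\<in>B. q c * (if cov x c then 1 else 0))"
    using Suc.prems(2) by (simp add: U'_def)
  ultimately obtain C where C: "C \<subseteq> B" "card C \<le> m" "\<forall>x\<in>U'. \<exists>c\<in>C. cov x c"
    using Suc.IH[OF fU'] by blast
  have "card (insert c C) \<le> Suc m"
    using C(1,2) B by (metis card_insert_le_m1 finite_subset le_SucI not_less_eq_eq card_insert_if)
  moreover have "\<forall>x\<in>U. \<exists>c'\<in>insert c C. cov x c'" using C(3) unfolding U'_def by auto
  ultimately show ?case using C(1) cB by (intro exI[of _ "insert c C"]) auto
qed

lemma cover_budget: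
  fixes a R :: real
  assumes a: "a \<ge> 0" and rate: "4 * real n + 7 \<le> 2 powr (real n * (R - a))"
  shows "\<exists>\<rho> m. 0 < \<rho> \<and> \<rho> \<le> 1 \<and> \<rho> \<le> 2 powr (- (real n * a)) / 2 \<and>
           2 ^ n * (1 - \<rho>)^m < (1 :: real) \<and> real m + 1 \<le> 2 powr (real n * R)"
proof -
  define X where "X = 2 powr (real n * a)"
  define \<rho> where "\<rho> = 1 / (2 * X)"
  define m where "m = nat \<lceil>(real n + 1) / \<rho>\<rceil>"
  have X1: "X \<ge> 1" unfolding X_def using a by (intro ge_one_powr_ge_zero) auto
  have \<rho>: "0 < \<rho>" "\<rho> \<le> 1" "\<rho> \<le> 2 powr (- (real n * a)) / 2"
    using X1 by (auto simp: \<rho>_def X_def powr_minus divide_simps)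
  have "0 \<le> (real n + 1) / \<rho>" using \<rho>(1) by simp
  then have "0 \<le> \<lceil>(real n + 1) / \<rho>\<rceil>" by linarith
  then have "real m = of_int \<lceil>(real n + 1) / \<rho>\<rceil>" unfolding m_def by (rule of_nat_nat)
  then have m_lower: "(real n + 1) / \<rho> \<le> real m" and m_upper: "real m \<le> (real n + 1) / \<rho> + 1"
    by (simp_all add: le_of_int_ceiling of_int_ceiling_le_add_one)
  have "(2::real) ^ n * (1 - \<rho>)^m \<le> exp (real n) * exp (- \<rho>)^m"
  proof (intro mult_mono power_mono)
    have "(2::real) ^ n \<le> exp 1 ^ n"
      using exp_ge_add_one_self[of 1] by (intro power_mono) auto
    then show "(2::real) ^ n \<le> exp (real n)"
      by (simp add: exp_of_nat_mult[symmetric])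
  qed (use \<rho> exp_minus_ge[of \<rho>] in auto)
  also have "\<dots> = exp (real n - \<rho> * real m)"
    by (simp add: exp_of_nat_mult[symmetric] exp_diff exp_minus field_simps)
  also have "\<dots> \<le> exp (- 1)"
    using m_lower \<rho>(1) by (simp add: divide_le_eq mult.commute)
  also have "\<dots> < 1" by simp
  finally have cover: "(2::real) ^ n * (1 - \<rho>)^m < 1" .
  have "real m + 1 \<le> (real n + 1) * (2 * X) + 2"
    using m_upper by (simp add: \<rho>_def)
  also have "\<dots> \<le> (4 * real n + 7) * X"
    using X1 by (simp add: algebra_simps) (use mult_nonneg_nonneg[of X "real n * 2"] X1 in linarith)
  also have "\<dots> \<le> 2 powr (real n * (R - a)) * X" using rate X1 by (intro mult_right_mono) auto
  also have "\<dots> = 2 powr (real n * R)" unfolding X_def by (simp add: powr_add[symmetric] algebra_simps)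
  finally show ?thesis using \<rho> cover by blast
qed

lemma exists_index_encoding:
  assumes "finite C" "card C \<le> M"
  shows "\<exists>(enc :: 'a \<Rightarrow> nat) dec. \<forall>c\<in>C. enc c \<in> {1..M} \<and> dec (enc c) = c"
proof -
  obtain h where h: "bij_betw h {1..card C} C" using ex_bij_betw_nat_finite_1[OF assms(1)] by blast
  have "inv_into {1..card C} h c \<in> {1..card C}" "h (inv_into {1..card C} h c) = c" if "c \<in> C" for c
    using h that by (metis bij_betw_def inv_into_into) (meson h that bij_betw_inv_into_right)
  then have "\<forall>c\<in>C. inv_into {1..card C} h c \<in> {1..M} \<and> h (inv_into {1..card C} h c) = c"
    using assms(2) by fastforce
  then show ?thesis by blast
qed

lemma Hb_nonneg: "0 \<le> q \<Longrightarrow> q \<le> 1 \<Longrightarrow> Hb q \<ge> 0"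
  unfolding Hb_def
  by (smt (verit, del_insts) log_le_zero_cancel_iff mult_nonneg_nonpos zero_less_mult_iff
      mult_minus_left less_eq_real_def)

lemma Hb_has_derivative:
  assumes "0 < x" "x < 1"
  shows "(Hb has_real_derivative (log 2 (1 - x) - log 2 x)) (at x)"
proof -
  have "Hb = (\<lambda>y. (- (y * ln y) - (1 - y) * ln (1 - y)) / ln 2)"
    by (rule ext) (simp add: Hb_def log_def diff_divide_distrib)
  moreover have "((\<lambda>y. (- (y * ln y) - (1 - y) * ln (1 - y)) / ln 2)
      has_real_derivative ((- (ln x + 1) - (- ln (1 - x) - 1)) / ln 2)) (at x)"
    using assms by (auto intro!: derivative_eq_intros)
  ultimately show ?thesis by (simp add: log_def diff_divide_distrib)
qed

lemma Hb_mono: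
  assumes "0 \<le> D" "D \<le> p" "p \<le> 1/2"
  shows "Hb D \<le> Hb p"
proof (cases "D = 0")
  case True
  then show ?thesis using Hb_nonneg[of p] assms by (simp add: Hb_def)
next
  case False
  show ?thesis
  proof (rule DERIV_nonneg_imp_nondecreasing[OF assms(2)])
    fix x assume x: "D \<le> x" "x \<le> p"
    then have "0 < x" "x < 1" using False assms by auto
    moreover have "log 2 x \<le> log 2 (1 - x)" using x False assms by (subst log_le_cancel_iff) auto
    ultimately show "\<exists>y. (Hb has_real_derivative y) (at x) \<and> 0 \<le> y"
      using Hb_has_derivative by force
  qed
qed

section \<open>Lossy coding of a Bernoulli source under Hamming distortion\<close>

definition hamming_dist :: "'a list \<Rightarrow> 'a list \<Rightarrow> real" where
  "hamming_dist x c = (\<Sum>j<length x. hamming (x!j) (c!j))"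

definition lossy_code ::
  "nat \<Rightarrow> real \<Rightarrow> ('a \<Rightarrow> real) \<Rightarrow> ('a list \<Rightarrow> nat) \<Rightarrow> (nat \<Rightarrow> 'a list) \<Rightarrow> real \<Rightarrow> bool" where
  "lossy_code n R q enc dec D \<longleftrightarrow>
     (\<forall>x. length x = n \<longrightarrow> enc x \<in> {1..msgs n R}) \<and>
     block_expect (replicate n q) UNIV (\<lambda>x. hamming_dist x (dec (enc x))) \<le> n * D"

definition lossy_achievable :: "('a \<Rightarrow> real) \<Rightarrow> real \<Rightarrow> real \<Rightarrow> bool" where
  "lossy_achievable q R D \<longleftrightarrow> (\<forall>\<epsilon>>0. \<exists>N. \<forall>n\<ge>N. \<exists>enc dec. lossy_code n R q enc dec (D + \<epsilon>))"

lemma lossy_code_mono: "lossy_code n R q enc dec D \<Longrightarrow> D \<le> D' \<Longrightarrow> lossy_code n R q enc dec D'"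
  unfolding lossy_code_def by (meson mult_left_mono of_nat_0_le_iff order_trans)

lemma hamming_dist_le_length: "hamming_dist x c \<le> length x"
  using sum_mono[of "{..<length x}" "\<lambda>j. hamming (x!j) (c!j)" "\<lambda>_. 1"]
  by (simp add: hamming_dist_def hamming_def)

lemma sum_UNIV_bool: "(\<Sum>c\<in>(UNIV :: bool set). f c) = f True + f False"
  by (simp add: UNIV_bool add.commute)

text \<open>The reverse test channel achieving \<open>Hb p - Hb D\<close>: a reconstruction bit \<open>C \<sim> Bern w\<close>,
  flipped by independent noise \<open>Z \<sim> Bern D\<close>, yields \<open>X \<sim> Bern p\<close>. \<open>W x c\<close> is the posterior of \<open>C\<close>
  given \<open>X = x\<close> and \<open>L x c = log (P(x | c) / P(x))\<close> the information density.\<close>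
locale bernoulli_test_channel =
  fixes p D :: real
  assumes D_nonneg: "0 \<le> D" and D_less: "D < p" and p_le_half: "p \<le> 1/2"
begin

definition "w = (p - D) / (1 - 2 * D)"
definition "px b = (if b then p else 1 - p)"
definition "Q b = (if b then w else 1 - w)"
definition "PZ z = (if z then D else 1 - D)"
definition "W x c = Q c * PZ (x \<noteq> c) / px x"
definition "L x c = log 2 (PZ (x \<noteq> c)) - log 2 (px x)"
definition "info_mean x = (\<Sum>c\<in>UNIV. W x c * L x c)"
definition "dist_mean x = (\<Sum>c\<in>UNIV. W x c * hamming x c)"
definition "info_sum x c = (\<Sum>j<length x. L (x!j) (c!j))"
definition "L_bound = \<bar>L True True\<bar> + \<bar>L True False\<bar> + \<bar>L False True\<bar> + \<bar>L False False\<bar>"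
definition "info_mean_bound = \<bar>info_mean True\<bar> + \<bar>info_mean False\<bar>"

definition typical :: "nat \<Rightarrow> real \<Rightarrow> bool list \<Rightarrow> bool" where
  "typical n \<delta> x \<longleftrightarrow> (\<Sum>j<n. dist_mean (x!j)) \<le> n * (D + \<delta>) \<and>
                     (\<Sum>j<n. info_mean (x!j)) \<le> n * (Hb p - Hb D + \<delta>)"

definition admissible_block :: "nat \<Rightarrow> real \<Rightarrow> real \<Rightarrow> bool" where
  "admissible_block n \<delta> R \<longleftrightarrow> 0 < n \<and>
     4 * (1 + L_bound\<^sup>2 + info_mean_bound\<^sup>2) / (n * \<delta>\<^sup>2) \<le> min (1/4) (\<delta>/2) \<and>
     4 * real n + 7 \<le> 2 powr (n * (R - (Hb p - Hb D) - 2 * \<delta>))"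

lemma p_pos: "0 < p"
  using D_nonneg D_less by linarith

lemma p_eq_mix: "p = w * (1 - D) + (1 - w) * D"
proof -
  have "w * (1 - 2 * D) = p - D"
    using D_nonneg D_less p_le_half unfolding w_def by simp
  then show ?thesis by (simp add: algebra_simps)
qed

lemma w_pos: "0 < w"
  using D_nonneg D_less p_le_half by (simp add: w_def)

lemma w_less_1: "w < 1"
  using D_nonneg D_less p_le_half by (simp add: w_def divide_less_eq)

lemma px_pos: "px b > 0"
  using p_pos p_le_half by (auto simp: px_def)

lemma Q_pos: "Q b > 0"
  using w_pos w_less_1 by (auto simp: Q_def)

lemma PZ_nonneg: "PZ z \<ge> 0"
  using D_nonneg D_less p_le_half by (auto simp: PZ_def)

lemma W_nonneg: "W x c \<ge> 0"
  using Q_pos PZ_nonneg px_pos by (simp add: W_def less_imp_le)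

lemma W_sum: "(\<Sum>c\<in>UNIV. W x c) = 1"
proof -
  have "(\<Sum>c\<in>UNIV. W x c) = (Q True * PZ (x \<noteq> True) + Q False * PZ (x \<noteq> False)) / px x"
    by (simp add: sum_UNIV_bool W_def add_divide_distrib)
  also have "\<dots> = 1"
    using px_pos[of x] p_eq_mix by (cases x) (auto simp: Q_def PZ_def px_def field_simps)
  finally show ?thesis .
qed

lemma prob_weights_posterior: "prob_weights (map W x) UNIV"
  using W_nonneg W_sum by (auto simp: prob_weights_def)

lemma prob_weights_px: "prob_weights (replicate n px) UNIV"
  using px_pos by (auto simp: prob_weights_def sum_UNIV_bool px_def less_imp_le)

lemma prob_weights_Q: "prob_weights (replicate n Q) UNIV"
  using Q_pos by (auto simp: prob_weights_def sum_UNIV_bool Q_def less_imp_le)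

lemma dist_mean_average: "p * dist_mean True + (1 - p) * dist_mean False = D"
proof -
  have "p * dist_mean True + (1 - p) * dist_mean False = Q False * D + Q True * D"
    using px_pos[of True] px_pos[of False]
    by (simp add: dist_mean_def sum_UNIV_bool W_def hamming_def PZ_def px_def)
  then show ?thesis by (simp add: Q_def algebra_simps)
qed

lemma info_mean_average: "p * info_mean True + (1 - p) * info_mean False = Hb p - Hb D"
proof -
  have px_info_mean: "px x * info_mean x = (\<Sum>c\<in>UNIV. Q c * PZ (x \<noteq> c) * L x c)" for x
    unfolding info_mean_def sum_distrib_left
    by (intro sum.cong refl) (use px_pos[of x] in \<open>simp add: W_def\<close>)
  have "p * info_mean True + (1 - p) * info_mean False
      = (1 - D) * log 2 (1 - D) + D * log 2 D - (w * (1 - D) + (1 - w) * D) * log 2 p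
        - (1 - (w * (1 - D) + (1 - w) * D)) * log 2 (1 - p)"
    using px_info_mean[of True] px_info_mean[of False]
    by (simp add: sum_UNIV_bool L_def PZ_def px_def Q_def algebra_simps)
  also have "\<dots> = Hb p - Hb D"
    by (simp only: p_eq_mix[symmetric]) (simp add: Hb_def algebra_simps)
  finally show ?thesis .
qed

lemma Q_ge_W_powr: "Q c \<ge> W x c * 2 powr (- L x c)"
proof (cases "PZ (x \<noteq> c) = 0")
  case True then show ?thesis using Q_pos by (simp add: W_def less_imp_le)
next
  case False
  then have "PZ (x \<noteq> c) > 0" using PZ_nonneg by (simp add: order_less_le)
  moreover have "2 powr (- L x c) = px x / PZ (x \<noteq> c)"
    using calculation px_pos[of x] by (simp add: L_def powr_diff powr_minus)
  ultimately show ?thesis using px_pos[of x] by (simp add: W_def)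
qed

lemma abs_L_le: "\<bar>L a b\<bar> \<le> L_bound"
  by (cases a; cases b) (auto simp: L_bound_def)

lemma abs_info_mean_le: "\<bar>info_mean x\<bar> \<le> info_mean_bound"
  by (cases x) (auto simp: info_mean_bound_def)

lemma abs_dist_mean_le: "\<bar>dist_mean x\<bar> \<le> 1"
proof -
  have "0 \<le> dist_mean x"
    unfolding dist_mean_def by (intro sum_nonneg mult_nonneg_nonneg) (auto simp: W_nonneg hamming_def)
  moreover have "dist_mean x \<le> (\<Sum>c\<in>UNIV. W x c)"
    unfolding dist_mean_def by (intro sum_mono) (auto simp: W_nonneg hamming_def)
  ultimately show ?thesis using W_sum by simp
qed

lemma admissible_block_bounds:
  assumes "admissible_block n \<delta> R" "\<delta> > 0"
  shows "0 < n" "4 / (n * \<delta>\<^sup>2) \<le> min (1/4) (\<delta>/2)" "4 * L_bound\<^sup>2 / (n * \<delta>\<^sup>2) \<le> 1/4"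
    "4 * info_mean_bound\<^sup>2 / (n * \<delta>\<^sup>2) \<le> \<delta>/2"
proof -
  show n: "0 < n" using assms by (simp add: admissible_block_def)
  define K where "K = 4 * (1 + L_bound\<^sup>2 + info_mean_bound\<^sup>2)"
  have le: "c / (n * \<delta>\<^sup>2) \<le> min (1/4) (\<delta>/2)" if "c \<le> K" for c
  proof -
    have "c / (n * \<delta>\<^sup>2) \<le> K / (n * \<delta>\<^sup>2)" using that by (intro divide_right_mono) auto
    also have "\<dots> \<le> min (1/4) (\<delta>/2)" using assms(1) by (simp only: admissible_block_def K_def)
    finally show ?thesis .
  qed
  show "4 / (n * \<delta>\<^sup>2) \<le> min (1/4) (\<delta>/2)" "4 * L_bound\<^sup>2 / (n * \<delta>\<^sup>2) \<le> 1/4"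
    "4 * info_mean_bound\<^sup>2 / (n * \<delta>\<^sup>2) \<le> \<delta>/2"
    using le[of 4] le[of "4 * L_bound\<^sup>2"] le[of "4 * info_mean_bound\<^sup>2"] by (auto simp: K_def)
qed

lemma eventually_admissible_block:
  assumes "\<delta> > 0" "R - (Hb p - Hb D) - 2 * \<delta> > 0"
  shows "eventually (\<lambda>n. admissible_block n \<delta> R) sequentially"
proof -
  define K where "K = 4 * (1 + L_bound\<^sup>2 + info_mean_bound\<^sup>2)"
  have "filterlim (\<lambda>n. real n * \<delta>\<^sup>2) at_top sequentially"
    by (rule filterlim_at_top_mult_tendsto_pos[OF tendsto_const])
      (use assms in \<open>auto intro: filterlim_real_sequentially\<close>)
  then have "((\<lambda>n. K / (real n * \<delta>\<^sup>2)) \<longlongrightarrow> 0) sequentially"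
    by (intro tendsto_divide_0[OF tendsto_const] filterlim_at_top_imp_at_infinity)
  moreover have "0 < min (1/4) (\<delta>/2)" using assms by simp
  ultimately have "eventually (\<lambda>n. K / (real n * \<delta>\<^sup>2) < min (1/4) (\<delta>/2)) sequentially"
    by (rule order_tendstoD)
  moreover have "eventually (\<lambda>n. 4 * real n + 7 \<le> 2 powr (n * (R - (Hb p - Hb D) - 2 * \<delta>))) sequentially"
    using assms(2) by real_asymp
  ultimately show ?thesis
    unfolding admissible_block_def K_def
    by (auto elim: eventually_mono[OF eventually_conj[OF eventually_conj[OF eventually_gt_at_top]]]
        intro: less_imp_le)
qed

lemma block_sum_hamming: "block_sum (map hamming x) c = hamming_dist x c"
  by (simp add: block_sum_def hamming_dist_def)

lemma block_sum_L: "block_sum (map L x) c = info_sum x c"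
  by (simp add: block_sum_def info_sum_def)

lemma block_mean_hamming: "block_mean (map hamming x) (map W x) UNIV = (\<Sum>j<length x. dist_mean (x!j))"
  by (simp add: block_mean_def dist_mean_def)

lemma block_mean_L: "block_mean (map L x) (map W x) UNIV = (\<Sum>j<length x. info_mean (x!j))"
  by (simp add: block_mean_def info_mean_def)

lemma posterior_good_prob:
  assumes x: "length x = n" "typical n \<delta> x" and n: "0 < n" and \<delta>: "\<delta> > 0"
    and small: "4 / (n * \<delta>\<^sup>2) \<le> 1/4" "4 * L_bound\<^sup>2 / (n * \<delta>\<^sup>2) \<le> 1/4"
  shows "block_expect (map W x) UNIV (\<lambda>c. if hamming_dist x c \<le> n * (D + 2 * \<delta>) \<and>
           info_sum x c \<le> n * (Hb p - Hb D + 2 * \<delta>) then 1 else 0) \<ge> 1/2"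
proof -
  define t where "t = n * \<delta>"
  have t: "t > 0" "t\<^sup>2 = n * (n * \<delta>\<^sup>2)" using n \<delta> by (simp_all add: t_def power2_eq_square)
  define far_dist where
    "far_dist = (\<lambda>c. if t \<le> \<bar>hamming_dist x c - (\<Sum>j<n. dist_mean (x!j))\<bar> then 1 else 0 :: real)"
  define far_info where
    "far_info = (\<lambda>c. if t \<le> \<bar>info_sum x c - (\<Sum>j<n. info_mean (x!j))\<bar> then 1 else 0 :: real)"
  have "block_expect (map W x) UNIV far_dist \<le> real n * (4 * 1\<^sup>2) / t\<^sup>2"
    using block_expect_chebyshev[of UNIV "map W x" "map hamming x" 1 t] t x prob_weights_posterior
    by (simp add: far_dist_def block_sum_hamming block_mean_hamming hamming_def)
  also have "\<dots> \<le> 1/4" using small n t by simp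
  finally have far_dist_le: "block_expect (map W x) UNIV far_dist \<le> 1/4" .
  have "block_expect (map W x) UNIV far_info \<le> real n * (4 * L_bound\<^sup>2) / t\<^sup>2"
    using block_expect_chebyshev[of UNIV "map W x" "map L x" L_bound t] t x prob_weights_posterior
    by (simp add: far_info_def block_sum_L block_mean_L abs_L_le)
  also have "\<dots> \<le> 1/4" using small n t by simp
  finally have far_info_le: "block_expect (map W x) UNIV far_info \<le> 1/4" .
  have "1 - far_dist c - far_info c \<le> (if hamming_dist x c \<le> n * (D + 2 * \<delta>) \<and>
           info_sum x c \<le> n * (Hb p - Hb D + 2 * \<delta>) then 1 else 0)" for c
    using x(2) unfolding far_dist_def far_info_def typical_def t_def by (auto simp: algebra_simps)
  then have "block_expect (map W x) UNIV (\<lambda>c. 1 - far_dist c - far_info c) \<le>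
      block_expect (map W x) UNIV (\<lambda>c. if hamming_dist x c \<le> n * (D + 2 * \<delta>) \<and>
           info_sum x c \<le> n * (Hb p - Hb D + 2 * \<delta>) then 1 else 0)"
    by (intro block_expect_mono) (auto simp: W_nonneg)
  moreover have "block_expect (map W x) UNIV (\<lambda>c. 1 - far_dist c - far_info c)
      = 1 - block_expect (map W x) UNIV far_dist - block_expect (map W x) UNIV far_info"
    by (simp add: block_expect_diff block_expect_const[OF _ prob_weights_posterior])
  ultimately show ?thesis using far_dist_le far_info_le by simp
qed

text \<open>Change of measure: on reconstructions that are good for \<open>x\<close> the likelihood ratio
  \<open>Q / W(x,\<cdot>)\<close> is at least \<open>2^{-info_sum x c}\<close>, and they carry posterior mass \<open>\<ge> 1/2\<close>.\<close>
lemma covering_prob: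
  assumes x: "length x = n" "typical n \<delta> x" and n: "0 < n" and \<delta>: "\<delta> > 0"
    and small: "4 / (n * \<delta>\<^sup>2) \<le> 1/4" "4 * L_bound\<^sup>2 / (n * \<delta>\<^sup>2) \<le> 1/4"
  shows "block_expect (replicate n Q) UNIV (\<lambda>c. if hamming_dist x c \<le> n * (D + 2 * \<delta>) then 1 else 0)
           \<ge> 2 powr (- (n * (Hb p - Hb D + 2 * \<delta>))) / 2"
proof -
  define a where "a = n * (Hb p - Hb D + 2 * \<delta>)"
  define good where
    "good c \<longleftrightarrow> hamming_dist x c \<le> n * (D + 2 * \<delta>) \<and> info_sum x c \<le> a" for c
  have posterior: "block_expect (map W x) UNIV F = (\<Sum>c\<in>blocks UNIV n. (\<Prod>k<n. W (x!k) (c!k)) * F c)"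
    for F using x(1) by (simp add: block_expect_def)
  have tilt: "(\<Prod>k<n. W (x!k) (c!k)) * 2 powr (- a) \<le> (\<Prod>k<n. Q (c!k))" if "good c" for c
  proof -
    have "(\<Prod>k<n. W (x!k) (c!k)) * 2 powr (- a) \<le> (\<Prod>k<n. W (x!k) (c!k)) * 2 powr (- info_sum x c)"
      using that by (intro mult_left_mono prod_nonneg) (auto simp: good_def W_nonneg)
    also have "\<dots> = (\<Prod>k<n. W (x!k) (c!k) * 2 powr (- L (x!k) (c!k)))"
      by (simp add: info_sum_def x(1) powr_sum prod.distrib sum_negf[symmetric])
    also have "\<dots> \<le> (\<Prod>k<n. Q (c!k))"
      by (intro prod_mono) (auto simp: Q_ge_W_powr W_nonneg)
    finally show ?thesis .
  qed
  have "2 powr (- a) / 2 \<le> 2 powr (- a) * block_expect (map W x) UNIV (\<lambda>c. if good c then 1 else 0)"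
    using posterior_good_prob[OF assms] by (simp add: good_def a_def)
  also have "\<dots> = (\<Sum>c\<in>blocks UNIV n. (\<Prod>k<n. W (x!k) (c!k)) * (if good c then 2 powr (- a) else 0))"
    unfolding posterior sum_distrib_left by (intro sum.cong refl) auto
  also have "\<dots> \<le> (\<Sum>c\<in>blocks UNIV n. (\<Prod>k<n. Q (c!k)) *
                   (if hamming_dist x c \<le> n * (D + 2 * \<delta>) then 1 else 0))"
    using tilt Q_pos by (intro sum_mono) (auto simp: good_def prod_nonneg less_imp_le)
  finally show ?thesis by (simp add: block_expect_def a_def)
qed

lemma atypical_prob:
  assumes n: "0 < n" and \<delta>: "\<delta> > 0"
    and small: "4 / (n * \<delta>\<^sup>2) \<le> \<delta>/2" "4 * info_mean_bound\<^sup>2 / (n * \<delta>\<^sup>2) \<le> \<delta>/2"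
  shows "block_expect (replicate n px) UNIV (\<lambda>x. if typical n \<delta> x then 0 else 1) \<le> \<delta>"
proof -
  define t where "t = n * \<delta>"
  have t: "t > 0" "t\<^sup>2 = n * (n * \<delta>\<^sup>2)" using n \<delta> by (simp_all add: t_def power2_eq_square)
  define far_dist where
    "far_dist = (\<lambda>x. if t \<le> \<bar>(\<Sum>j<n. dist_mean (x!j)) - n * D\<bar> then 1 else 0 :: real)"
  define far_info where
    "far_info = (\<lambda>x. if t \<le> \<bar>(\<Sum>j<n. info_mean (x!j)) - n * (Hb p - Hb D)\<bar>
                   then 1 else 0 :: real)"
  have "block_mean (replicate n dist_mean) (replicate n px) UNIV = n * D"
    using dist_mean_average by (simp add: block_mean_def sum_UNIV_bool px_def)
  then have "block_expect (replicate n px) UNIV far_dist \<le> real n * (4 * 1\<^sup>2) / t\<^sup>2"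
    using block_expect_chebyshev[of UNIV "replicate n px" "replicate n dist_mean" 1 t]
      t prob_weights_px abs_dist_mean_le by (simp add: far_dist_def block_sum_def)
  also have "\<dots> \<le> \<delta>/2" using small n t by simp
  finally have far_dist_le: "block_expect (replicate n px) UNIV far_dist \<le> \<delta>/2" .
  have "block_mean (replicate n info_mean) (replicate n px) UNIV = n * (Hb p - Hb D)"
    using info_mean_average by (simp add: block_mean_def sum_UNIV_bool px_def)
  then have "block_expect (replicate n px) UNIV far_info \<le> real n * (4 * info_mean_bound\<^sup>2) / t\<^sup>2"
    using block_expect_chebyshev[of UNIV "replicate n px" "replicate n info_mean" info_mean_bound t]
      t prob_weights_px abs_info_mean_le by (simp add: far_info_def block_sum_def)
  also have "\<dots> \<le> \<delta>/2" using small n t by simp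
  finally have far_info_le: "block_expect (replicate n px) UNIV far_info \<le> \<delta>/2" .
  have "(if typical n \<delta> x then 0 else 1) \<le> far_dist x + far_info x" for x
    unfolding typical_def far_dist_def far_info_def t_def by (auto simp: algebra_simps)
  then have "block_expect (replicate n px) UNIV (\<lambda>x. if typical n \<delta> x then 0 else 1)
      \<le> block_expect (replicate n px) UNIV (\<lambda>x. far_dist x + far_info x)"
    using px_pos by (intro block_expect_mono) (auto intro: less_imp_le)
  then show ?thesis using far_dist_le far_info_le by (simp add: block_expect_add)
qed

lemma covering_codebook:
  assumes adm: "admissible_block n \<delta> R" and \<delta>: "\<delta> > 0"
  shows "\<exists>C \<subseteq> blocks UNIV n. card C + 1 \<le> msgs n R \<and>
           (\<forall>x\<in>blocks UNIV n. typical n \<delta> x \<longrightarrow> (\<exists>c\<in>C. hamming_dist x c \<le> n * (D + 2 * \<delta>)))"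
proof -
  note small = admissible_block_bounds[OF adm \<delta>]
  define a where "a = Hb p - Hb D + 2 * \<delta>"
  have "a \<ge> 0" using Hb_mono[of D p] D_nonneg D_less p_le_half \<delta> by (simp add: a_def)
  moreover have "4 * real n + 7 \<le> 2 powr (real n * (R - a))"
    using adm by (simp add: admissible_block_def a_def algebra_simps)
  ultimately obtain \<rho> m where \<rho>: "0 < \<rho>" "\<rho> \<le> 1" "\<rho> \<le> 2 powr (- (real n * a)) / 2"
    and budget: "2 ^ n * (1 - \<rho>)^m < (1 :: real)" "real m + 1 \<le> 2 powr (real n * R)"
    using cover_budget by blast
  define U where "U = {x \<in> blocks UNIV n. typical n \<delta> x}"
  define cov where "cov x c \<longleftrightarrow> hamming_dist x c \<le> n * (D + 2 * \<delta>)" for x c :: "bool list"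
  define q where "q c = (\<Prod>k<n. Q (c!k))" for c
  have fin: "finite (blocks (UNIV :: bool set) n)" by (simp add: finite_blocks)
  have q_nonneg: "\<forall>c. q c \<ge> 0" unfolding q_def by (simp add: prod_nonneg less_imp_le Q_pos)
  have "block_expect (replicate n Q) UNIV (\<lambda>_. 1) = 1"
    by (rule block_expect_const) (simp_all add: prob_weights_Q)
  then have q_sum: "(\<Sum>c\<in>blocks UNIV n. q c) = 1" by (simp add: block_expect_def q_def)
  have "\<rho> \<le> (\<Sum>c\<in>blocks UNIV n. q c * (if cov x c then 1 else 0))" if "x \<in> U" for x
  proof -
    have "length x = n" "typical n \<delta> x" using that by (simp_all add: U_def blocks_def)
    from covering_prob[OF this small(1) \<delta>] small \<rho>(3) show ?thesis
      by (simp add: block_expect_def q_def cov_def a_def)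
  qed
  moreover have "real (card U) * (1 - \<rho>)^m < 1"
  proof -
    have "card U \<le> card (blocks (UNIV :: bool set) n)" by (intro card_mono fin) (auto simp: U_def)
    then have "real (card U) \<le> 2 ^ n" by (simp add: card_blocks)
    then have "real (card U) * (1 - \<rho>)^m \<le> 2 ^ n * (1 - \<rho>)^m" using \<rho>(2) by (intro mult_right_mono) auto
    then show ?thesis using budget(1) by linarith
  qed
  ultimately obtain C where C: "C \<subseteq> blocks UNIV n" "card C \<le> m" "\<forall>x\<in>U. \<exists>c\<in>C. cov x c"
    using small_cover_exists[OF fin q_nonneg q_sum \<rho>(2), of U cov m] fin by (auto simp: U_def)
  have "real (card C + 1) \<le> 2 powr (real n * R)" using C(2) budget(2) by simp
  then have "card C + 1 \<le> msgs n R" unfolding msgs_def by (simp add: le_nat_floor)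
  with C show ?thesis unfolding U_def cov_def by blast
qed

text \<open>Atypical blocks are sent to a dummy word; they cost at most \<open>n\<close> each and have probability
  at most \<open>\<delta>\<close>.\<close>
lemma lossy_code_exists:
  assumes adm: "admissible_block n \<delta> R" and \<delta>: "\<delta> > 0"
  shows "\<exists>enc dec. lossy_code n R px enc dec (D + 3 * \<delta>)"
proof -
  note small = admissible_block_bounds[OF adm \<delta>]
  obtain C where C: "C \<subseteq> blocks UNIV n" "card C + 1 \<le> msgs n R"
    and cover: "\<forall>x\<in>blocks UNIV n. typical n \<delta> x \<longrightarrow> (\<exists>c\<in>C. hamming_dist x c \<le> n * (D + 2 * \<delta>))"
    using covering_codebook[OF adm \<delta>] by blast
  define z0 where "z0 = replicate n False"
  have fin: "finite C" using finite_subset[OF C(1)] by (simp add: finite_blocks)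
  then have "card (insert z0 C) \<le> msgs n R" using C(2) by (simp add: card_insert_if)
  then obtain enc dec where enc: "\<forall>c\<in>insert z0 C. enc c \<in> {1..msgs n R} \<and> dec (enc c) = c"
    using exists_index_encoding[of "insert z0 C"] fin by blast
  define quantize where "quantize x = (if x \<in> blocks UNIV n \<and> typical n \<delta> x
      then (SOME c. c \<in> C \<and> hamming_dist x c \<le> n * (D + 2 * \<delta>)) else z0)" for x
  have chosen: "quantize x \<in> C \<and> hamming_dist x (quantize x) \<le> n * (D + 2 * \<delta>)"
    if "x \<in> blocks UNIV n" "typical n \<delta> x" for x
    using that cover someI_ex[of "\<lambda>c. c \<in> C \<and> hamming_dist x c \<le> n * (D + 2 * \<delta>)"]
    by (auto simp: quantize_def)
  have quantize_in: "quantize x \<in> insert z0 C" for x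
    using chosen[of x] by (auto simp: quantize_def)
  have pointwise: "hamming_dist x (dec (enc (quantize x)))
      \<le> n * (D + 2 * \<delta>) + n * (if typical n \<delta> x then 0 else 1 :: real)" if "x \<in> blocks UNIV n" for x
  proof -
    have "dec (enc (quantize x)) = quantize x" using enc quantize_in by blast
    moreover have "hamming_dist x (quantize x) \<le> n" using hamming_dist_le_length[of x] that
      by (simp add: blocks_def)
    moreover have "0 \<le> n * (D + 2 * \<delta>)" using D_nonneg \<delta> by simp
    ultimately show ?thesis using chosen[OF that] by auto
  qed
  have "block_expect (replicate n px) UNIV (\<lambda>x. hamming_dist x (dec (enc (quantize x))))
      \<le> block_expect (replicate n px) UNIV
           (\<lambda>x. n * (D + 2 * \<delta>) + n * (if typical n \<delta> x then 0 else 1 :: real))"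
    using pointwise px_pos by (intro block_expect_mono) (auto intro: less_imp_le)
  also have "\<dots> \<le> n * (D + 2 * \<delta>) + n * \<delta>"
    using atypical_prob[OF small(1) \<delta>] small
    by (simp add: block_expect_add block_expect_cmult block_expect_const prob_weights_px)
  also have "\<dots> = n * (D + 3 * \<delta>)" by (simp add: algebra_simps)
  finally have "block_expect (replicate n px) UNIV (\<lambda>x. hamming_dist x (dec ((enc \<circ> quantize) x)))
      \<le> n * (D + 3 * \<delta>)" by simp
  moreover have "(enc \<circ> quantize) x \<in> {1..msgs n R}" for x using enc quantize_in[of x] by auto
  ultimately show ?thesis unfolding lossy_code_def by blast
qed

lemma lossy_achievable_px:
  assumes R: "R > Hb p - Hb D"
  shows "lossy_achievable px R D"
  unfolding lossy_achievable_def
proof (intro allI impI)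
  fix \<epsilon> :: real assume \<epsilon>: "\<epsilon> > 0"
  define \<delta> where "\<delta> = min (\<epsilon> / 3) ((R - (Hb p - Hb D)) / 4)"
  have "\<delta> \<le> (R - (Hb p - Hb D)) / 4" unfolding \<delta>_def by (rule min.cobounded2)
  then have \<delta>: "\<delta> > 0" "R - (Hb p - Hb D) - 2 * \<delta> > 0" "3 * \<delta> \<le> \<epsilon>"
    using \<epsilon> R by (auto simp: \<delta>_def)
  obtain N where "\<And>n. n \<ge> N \<Longrightarrow> admissible_block n \<delta> R"
    using eventually_admissible_block[OF \<delta>(1,2)] unfolding eventually_sequentially by blast
  then have "\<exists>enc dec. lossy_code n R px enc dec (D + \<epsilon>)" if "n \<ge> N" for n
    using lossy_code_exists[OF _ \<delta>(1), of n R] lossy_code_mono \<delta>(3) that by (meson add_left_mono)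
  then show "\<exists>N. \<forall>n\<ge>N. \<exists>enc dec. lossy_code n R px enc dec (D + \<epsilon>)" by blast
qed

end

lemma bernoulli_lossy_achievable:
  assumes p: "0 < p" "p \<le> 1/2" and D: "0 \<le> D" "D \<le> p" and R: "R > Hb p - Hb D"
  shows "lossy_achievable (pmf (bernoulli_pmf p)) R D"
proof (cases "D < p")
  case True
  then interpret bernoulli_test_channel p D using p D by unfold_locales auto
  have "px = pmf (bernoulli_pmf p)" using p by (auto simp: px_def)
  then show ?thesis using lossy_achievable_px[OF R] by simp
next
  case False
  then have "D = p" "R > 0" using D R by auto
  have "lossy_code n R (pmf (bernoulli_pmf p)) (\<lambda>_. 1) (\<lambda>_. replicate n False) D" for n
  proof -
    have "1 \<le> 2 powr (real n * R)" using \<open>R > 0\<close> by (intro ge_one_powr_ge_zero) auto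
    then have msgs: "1 \<le> msgs n R" unfolding msgs_def by (simp add: le_nat_floor)
    have "prob_weights (replicate n (pmf (bernoulli_pmf p))) UNIV"
      using p by (auto simp: prob_weights_def UNIV_bool)
    then have "block_expect (replicate n (pmf (bernoulli_pmf p))) UNIV
        (\<lambda>x. hamming_dist x (replicate n False))
        = block_mean (replicate n (\<lambda>b. hamming b False)) (replicate n (pmf (bernoulli_pmf p))) UNIV"
      by (subst block_expect_block_sum[symmetric])
        (auto intro!: block_expect_cong simp: hamming_dist_def block_sum_def blocks_def)
    also have "\<dots> = n * D" using p \<open>D = p\<close> by (simp add: block_mean_def UNIV_bool hamming_def)
    finally show ?thesis using msgs unfolding lossy_code_def by simp
  qed
  then show ?thesis
    unfolding lossy_achievable_def using lossy_code_mono by (meson le_add_same_cancel1 less_imp_le)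
qed

section \<open>The example\<close>

lemma avg_dist_hamming_le:
  fixes f :: "'x \<Rightarrow> 'y \<Rightarrow> 'f :: finite"
  defines "g \<equiv> \<lambda>z. f (fst z) (snd z)"
  assumes fin: "finite (set_pmf P)" and full: "set_pmf (map_pmf g P) = UNIV" and n: "0 < n"
    and code: "lossy_code n R (pmf (map_pmf g P)) enc dec D"
    and Fhat: "\<And>zs j. zs \<in> blocks (set_pmf P) n \<Longrightarrow> j < n \<Longrightarrow>
                 Fhat (map fst zs) (map snd zs) j = dec (enc (map g zs)) ! j"
  shows "avg_dist P n f hamming Fhat \<le> D"
proof -
  have "avg_dist P n f hamming Fhat = (1 / real n) *
      block_expect (replicate n (pmf P)) (set_pmf P)
        (\<lambda>zs. hamming_dist (map g zs) (dec (enc (map g zs))))"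
    unfolding avg_dist_eq_block_expect
    by (intro arg_cong2[where f = "(*)"] refl block_expect_cong)
      (simp add: Fhat hamming_dist_def g_def blocks_def)
  also have "\<dots> = (1 / real n) *
      block_expect (replicate n (pmf (map_pmf g P))) UNIV (\<lambda>v. hamming_dist v (dec (enc v)))"
    using block_expect_map_pmf[OF fin, of n "\<lambda>v. hamming_dist v (dec (enc v))" g] full by (simp only:)
  also have "\<dots> \<le> (1 / real n) * (n * D)"
    using code by (intro mult_left_mono) (auto simp: lossy_code_def)
  also have "\<dots> = D" using n by simp
  finally show ?thesis .
qed

abbreviation uniform3 :: "nat pmf" where
  "uniform3 \<equiv> pmf_of_set {1, 2, 3}"

lemma set_pmf_ex_src: "0 < p \<Longrightarrow> p < 1 \<Longrightarrow> set_pmf (ex_src p) = ({1, 2, 3} \<times> UNIV) \<times> {1, 2, 3}"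
  by (simp add: ex_src_def)

lemma ex_src_X1_Y: "map_pmf (\<lambda>((x1, x2), y). (x1, y)) (ex_src p) = pair_pmf uniform3 uniform3"
proof -
  have "map_pmf (\<lambda>((x1, x2), y). (x1, y)) (ex_src p) = map_pmf (\<lambda>(a, b). (fst a, id b)) (ex_src p)"
    by (intro map_pmf_cong) auto
  then show ?thesis unfolding ex_src_def map_pair by (simp add: map_fst_pair_pmf)
qed

lemma ex_f1_distribution: "map_pmf (\<lambda>z. ex_f1 (fst z) (snd z)) (ex_src p) = bernoulli_pmf (1/3)"
proof (rule pmf_eqI)
  fix b :: bool
  have "map_pmf (\<lambda>z. ex_f1 (fst z) (snd z)) (ex_src p)
      = map_pmf (\<lambda>(a, c). a = c) (map_pmf (\<lambda>((x1, x2), y). (x1, y)) (ex_src p))"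
    by (simp add: pmf.map_comp comp_def ex_f1_def case_prod_unfold)
  also have "\<dots> = map_pmf (\<lambda>(a, c). a = c) (pair_pmf uniform3 uniform3)" by (simp only: ex_src_X1_Y)
  finally have "pmf (map_pmf (\<lambda>z. ex_f1 (fst z) (snd z)) (ex_src p)) b
      = (\<Sum>z\<in>{z\<in>{1, 2, 3 :: nat} \<times> {1, 2, 3}. (fst z = snd z) = b}.
           pmf (pair_pmf uniform3 uniform3) z)"
    by (simp add: pmf_map_pmf_eq_sum case_prod_unfold)
  also have "\<dots> = (\<Sum>z\<in>{z\<in>{1, 2, 3 :: nat} \<times> {1, 2, 3}. (fst z = snd z) = b}. 1/9)"
    by (intro sum.cong refl) (auto simp: pmf_pair)
  also have "\<dots> = pmf (bernoulli_pmf (1/3)) b"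
  proof (cases b)
    case True
    then have "{z\<in>{1, 2, 3 :: nat} \<times> {1, 2, 3}. (fst z = snd z) = b} = {(1, 1), (2, 2), (3, 3)}"
      by auto
    then show ?thesis using True by simp
  next
    case False
    then have "{z\<in>{1, 2, 3 :: nat} \<times> {1, 2, 3}. (fst z = snd z) = b}
        = {(1, 2), (1, 3), (2, 1), (2, 3), (3, 1), (3, 2 :: nat)}" by auto
    then show ?thesis using False by simp
  qed
  finally show "pmf (map_pmf (\<lambda>z. ex_f1 (fst z) (snd z)) (ex_src p)) b = pmf (bernoulli_pmf (1/3)) b" .
qed

lemma ex_f2_distribution: "map_pmf (\<lambda>z. ex_f2 (fst z) (snd z)) (ex_src p) = bernoulli_pmf p"
proof -
  have "map_pmf (\<lambda>z. ex_f2 (fst z) (snd z)) (ex_src p) = map_pmf snd (map_pmf fst (ex_src p))"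
    by (simp add: pmf.map_comp comp_def ex_f2_def)
  then show ?thesis by (simp add: ex_src_def map_fst_pair_pmf map_snd_pair_pmf)
qed

lemma entropy_pmf_uniform_support:
  assumes "\<And>x. x \<in> set_pmf q \<Longrightarrow> pmf q x = c"
  shows "entropy_pmf q = - real (card (set_pmf q)) * (c * log 2 c)"
  unfolding entropy_pmf_def using assms by simp

lemma cond_entropy_X1_Y: "cond_entropy_pmf (map_pmf (\<lambda>((x1, x2), y). (x1, y)) (ex_src p)) = log 2 3"
proof -
  have "entropy_pmf uniform3 = - 3 * ((1/3) * log 2 (1/3))"
    by (subst entropy_pmf_uniform_support[of _ "1/3"]) auto
  moreover have "entropy_pmf (pair_pmf uniform3 uniform3) = - 9 * ((1/9) * log 2 (1/9))"
    by (subst entropy_pmf_uniform_support[of _ "1/9"]) (auto simp: pmf_pair card_cartesian_product)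
  moreover have "log 2 (9 :: real) = 2 * log 2 3"
    using log_nat_power[of 3 2 2] by simp
  ultimately show ?thesis
    unfolding cond_entropy_pmf_def ex_src_X1_Y map_snd_pair_pmf by (simp add: log_divide)
qed

lemma entropy_ex_f1: "entropy_pmf (map_pmf (\<lambda>(x, y). ex_f1 x y) (ex_src p)) = Hb (1/3)"
proof -
  have "map_pmf (\<lambda>(x, y). ex_f1 x y) (ex_src p) = bernoulli_pmf (1/3)"
    using ex_f1_distribution by (simp add: case_prod_unfold)
  then show ?thesis by (simp add: entropy_pmf_def Hb_def UNIV_bool)
qed

lemma pow3_le_msgs: "R > log 2 3 \<Longrightarrow> 3 ^ n \<le> msgs n R"
proof -
  assume R: "R > log 2 3"
  have "2 powr (real n * log 2 3) = (2 powr log 2 3) powr real n"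
    by (simp only: powr_powr mult.commute)
  also have "\<dots> = real (3 ^ n)" by (simp add: powr_realpow)
  finally have "real (3 ^ n) = 2 powr (real n * log 2 3)" ..
  also have "\<dots> \<le> 2 powr (real n * R)" using R by (intro powr_mono mult_left_mono) auto
  finally show ?thesis unfolding msgs_def by (rule le_nat_floor)
qed

text \<open>The encoder \<open>\<phi>\<^sub>0\<close> sends \<open>X\<^sub>1\<^sup>n\<close> losslessly to the \<open>Y\<close>-terminal, which can then compute
  \<open>f\<^sub>1\<^sup>n\<close> exactly and compresses it with the lossy code for \<open>Bern(1/3)\<close>; the \<open>X\<close>-terminal compresses
  \<open>X\<^sub>2\<^sup>n\<close> with the lossy code for \<open>Bern(p)\<close>.\<close>
lemma ex_code_exists:
  assumes p: "0 < p" "p < 1" and R0: "R0 > log 2 3" and n: "0 < n"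
    and code1: "lossy_code n RY (pmf (bernoulli_pmf (1/3))) enc1 dec1 D1"
    and code2: "lossy_code n RX (pmf (bernoulli_pmf p)) enc2 dec2 D2"
  shows "\<exists>(phi0 :: (nat \<times> bool) list \<Rightarrow> nat) (phiX :: (nat \<times> bool) list \<Rightarrow> nat)
           (phiY :: nat list \<Rightarrow> nat \<Rightarrow> nat) (psi1 :: nat \<Rightarrow> nat \<Rightarrow> nat \<Rightarrow> bool)
           (psi2 :: nat \<Rightarrow> nat \<Rightarrow> nat \<Rightarrow> bool).
           is_code n R0 RX RY phi0 phiX phiY \<and>
           avg_dist (ex_src p) n ex_f1 hamming (\<lambda>xs ys. psi1 (phiX xs) (phiY ys (phi0 xs))) \<le> D1 \<and>
           avg_dist (ex_src p) n ex_f2 hamming (\<lambda>xs ys. psi2 (phiX xs) (phiY ys (phi0 xs))) \<le> D2"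
proof -
  define S where "S = blocks {1, 2, 3 :: nat} n"
  have "card S = 3 ^ n" unfolding S_def by (subst card_blocks) (simp_all add: numeral_3_eq_3)
  then have "card S \<le> msgs n R0" using pow3_le_msgs[OF R0, of n] by simp
  then obtain enc0 dec0 where enc0: "\<forall>c\<in>S. enc0 c \<in> {1..msgs n R0} \<and> dec0 (enc0 c) = c"
    using exists_index_encoding[of S] finite_blocks[of "{1, 2, 3}" n] unfolding S_def by blast
  have one_le: "1 \<le> msgs n R0" using pow3_le_msgs[OF R0, of n] one_le_power[of "3 :: nat" n] by linarith
  define phi0 where "phi0 xs = (if map fst xs \<in> S then enc0 (map fst xs) else 1)"
    for xs :: "(nat \<times> bool) list"
  define phiX where "phiX xs = enc2 (map snd xs)" for xs :: "(nat \<times> bool) list"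
  define phiY where "phiY ys m = enc1 (map (\<lambda>j. dec0 m ! j = ys ! j) [0..<n])" for ys :: "nat list" and m
  define psi1 where "psi1 i k j = dec1 k ! j" for i k j :: nat
  define psi2 where "psi2 i k j = dec2 i ! j" for i k j :: nat
  have code: "is_code n R0 RX RY phi0 phiX phiY"
    using enc0 code1 code2 one_le unfolding is_code_def phi0_def phiX_def phiY_def lossy_code_def by auto
  have src: "set_pmf (ex_src p) = ({1, 2, 3} \<times> UNIV) \<times> {1, 2, 3}"
    using p by (rule set_pmf_ex_src)
  then have fin: "finite (set_pmf (ex_src p))" by simp
  have X1_block: "map fst (map fst zs) \<in> S" if "zs \<in> blocks (set_pmf (ex_src p)) n" for zs
    using that unfolding src S_def blocks_def by fastforce
  have dist1: "avg_dist (ex_src p) n ex_f1 hamming (\<lambda>xs ys. psi1 (phiX xs) (phiY ys (phi0 xs))) \<le> D1"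
  proof (rule avg_dist_hamming_le[OF fin _ n])
    fix zs j assume zs: "zs \<in> blocks (set_pmf (ex_src p)) n" and "j < n"
    then have "dec0 (phi0 (map fst zs)) = map fst (map fst zs)" "length zs = n"
      using X1_block[OF zs] enc0 by (auto simp: phi0_def blocks_def)
    then have "map (\<lambda>j. dec0 (phi0 (map fst zs)) ! j = map snd zs ! j) [0..<n]
        = map (\<lambda>z. ex_f1 (fst z) (snd z)) zs"
      by (intro nth_equalityI) (auto simp: ex_f1_def)
    then show "psi1 (phiX (map fst zs)) (phiY (map snd zs) (phi0 (map fst zs))) j
        = dec1 (enc1 (map (\<lambda>z. ex_f1 (fst z) (snd z)) zs)) ! j"
      by (simp add: psi1_def phiY_def)
  qed (use code1 in \<open>simp_all add: ex_f1_distribution UNIV_bool\<close>)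
  have dist2: "avg_dist (ex_src p) n ex_f2 hamming (\<lambda>xs ys. psi2 (phiX xs) (phiY ys (phi0 xs))) \<le> D2"
  proof (rule avg_dist_hamming_le[OF fin _ n])
    fix zs j
    show "psi2 (phiX (map fst zs)) (phiY (map snd zs) (phi0 (map fst zs))) j
        = dec2 (enc2 (map (\<lambda>z. ex_f2 (fst z) (snd z)) zs)) ! j"
      by (simp add: psi2_def phiX_def ex_f2_def comp_def)
  qed (use code2 p in \<open>simp_all add: ex_f2_distribution\<close>)
  show ?thesis using code dist1 dist2 by blast
qed

lemma ex_achievable:
  assumes p: "0 < p" "p \<le> 1/2" and D2: "0 \<le> D2" "D2 \<le> p"
    and R: "R0 > log 2 3" "RX > Hb p - Hb D2" "RY > Hb (1/3)"
  shows "achievable (ex_src p) ex_f1 ex_f2 hamming hamming R0 RX RY 0 D2"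
  unfolding achievable_def
proof (intro allI impI)
  fix \<epsilon> :: real assume "\<epsilon> > 0"
  have "Hb 0 = 0" by (simp add: Hb_def)
  then have "lossy_achievable (pmf (bernoulli_pmf (1/3))) RY 0"
    using bernoulli_lossy_achievable[of "1/3" 0 RY] R(3) by simp
  then obtain N1 where
    N1: "\<And>n. n \<ge> N1 \<Longrightarrow> \<exists>enc dec. lossy_code n RY (pmf (bernoulli_pmf (1/3))) enc dec (0 + \<epsilon>)"
    using \<open>\<epsilon> > 0\<close> unfolding lossy_achievable_def by blast
  obtain N2 where N2: "\<And>n. n \<ge> N2 \<Longrightarrow> \<exists>enc dec. lossy_code n RX (pmf (bernoulli_pmf p)) enc dec (D2 + \<epsilon>)"
    using bernoulli_lossy_achievable[OF p D2 R(2)] \<open>\<epsilon> > 0\<close> unfolding lossy_achievable_def by blast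
  have "p < 1" using p by simp
  show "\<exists>N. \<forall>n\<ge>N. \<exists>phi0 phiX phiY psi1 psi2. is_code n R0 RX RY phi0 phiX phiY \<and>
      avg_dist (ex_src p) n ex_f1 hamming (\<lambda>xs ys. psi1 (phiX xs) (phiY ys (phi0 xs))) \<le> 0 + \<epsilon> \<and>
      avg_dist (ex_src p) n ex_f2 hamming (\<lambda>xs ys. psi2 (phiX xs) (phiY ys (phi0 xs))) \<le> D2 + \<epsilon>"
  proof (intro exI[of _ "max 1 (max N1 N2)"] allI impI)
    fix n assume "max 1 (max N1 N2) \<le> n"
    then have "0 < n" "N1 \<le> n" "N2 \<le> n" by auto
    then show "\<exists>phi0 phiX phiY psi1 psi2. is_code n R0 RX RY phi0 phiX phiY \<and>
      avg_dist (ex_src p) n ex_f1 hamming (\<lambda>xs ys. psi1 (phiX xs) (phiY ys (phi0 xs))) \<le> 0 + \<epsilon> \<and>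
      avg_dist (ex_src p) n ex_f2 hamming (\<lambda>xs ys. psi2 (phiX xs) (phiY ys (phi0 xs))) \<le> D2 + \<epsilon>"
      using N1 N2 ex_code_exists[OF p(1) \<open>p < 1\<close> R(1)] by blast
  qed
qed

theorem mainTheorem8:
  fixes p D2 :: real
  assumes "0 < p" and "p \<le> 1/2" and "0 \<le> D2" and "D2 \<le> p" and "D2 < 1/2"
  shows "(\<forall>R0 RX RY. R0 > log 2 3 \<and> RX > Hb p - Hb D2 \<and> RY > Hb (1/3) \<longrightarrow>
            achievable (ex_src p) ex_f1 ex_f2 hamming hamming R0 RX RY 0 D2)
       \<and> (\<forall>R0. R0 > cond_entropy_pmf (map_pmf (\<lambda>((x1, x2), y). (x1, y)) (ex_src p)) \<longrightarrow>
            (\<forall>\<delta>>0. \<exists>RX RY.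
               achievable (ex_src p) ex_f1 ex_f2 hamming hamming R0 RX RY 0 D2 \<and>
               RX + RY < entropy_pmf (map_pmf (\<lambda>(x, y). ex_f1 x y) (ex_src p))
                          + Hb p - Hb D2 + \<delta>))"
proof (intro conjI allI impI)
  fix R0 RX RY assume "log 2 3 < R0 \<and> Hb p - Hb D2 < RX \<and> Hb (1/3) < RY"
  then show "achievable (ex_src p) ex_f1 ex_f2 hamming hamming R0 RX RY 0 D2"
    using ex_achievable assms by blast
next
  fix R0 \<delta> :: real
  assume "cond_entropy_pmf (map_pmf (\<lambda>((x1, x2), y). (x1, y)) (ex_src p)) < R0" and "\<delta> > 0"
  then have "log 2 3 < R0" by (simp add: cond_entropy_X1_Y)
  with \<open>\<delta> > 0\<close> assms
  have "achievable (ex_src p) ex_f1 ex_f2 hamming hamming R0 (Hb p - Hb D2 + \<delta>/3) (Hb (1/3) + \<delta>/3) 0 D2"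
    by (intro ex_achievable) auto
  moreover have "(Hb p - Hb D2 + \<delta>/3) + (Hb (1/3) + \<delta>/3)
      < entropy_pmf (map_pmf (\<lambda>(x, y). ex_f1 x y) (ex_src p)) + Hb p - Hb D2 + \<delta>"
    using \<open>\<delta> > 0\<close> by (simp add: entropy_ex_f1)
  ultimately show "\<exists>RX RY. achievable (ex_src p) ex_f1 ex_f2 hamming hamming R0 RX RY 0 D2 \<and>
      RX + RY < entropy_pmf (map_pmf (\<lambda>(x, y). ex_f1 x y) (ex_src p)) + Hb p - Hb D2 + \<delta>"
    by blast
qed

end
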